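(* Let $\mathcal F=(F,\rightarrowtail)$ be an argumentation framework and $A\subseteq F$. If $A$ is strongly tenable then $A$ is tenable, and if $A$ is tenable then $A$ is statically tenable. Moreover both implications are strict: there exist a finite argumentation framework and a set of arguments in it that is tenable but not strongly tenable, and there exist a finite argumentation framework and a set of arguments in it that is statically tenable but not tenable.
   Context: An argumentation framework (AF) $\mathcal F=(F,\rightarrowtail)$ consists of a (possibly infinite) set $F$ of arguments and a binary attack relation $\rightarrowtail\subseteq F\times F$. An argument $a$ attacks a set $B$ if $a\rightarrowtail b$ for some $b\in B$; a set $A$ attacks $x$ if some $a\in A$ attacks $x$. $A^+=\{x\in F:\exists a\in A,\ a\rightarrowtail x\}$. A set is conflict-free if none of its elements attacks one of its elements. For $A,B\subseteq F$, $A$ is as cogent as $B$, written $A\succeq B$, if $A$ is conflict-free and every $b\in B$ that attacks $A$ belongs to $A^+$. We write $B\succ A$ if $B\succeq A$ and not $A\succeq B$. Static tenability: $A\subseteq F$ is statically tenable if for every finite conflict-free $B\subseteq F$ there is a conflict-free $C\supseteq A$ with $C\succeq B$. Strong tenability game: a strong tenability dispute on $\mathcal F$ is a finite sequence $(X_0,\dots,X_n)$ of subsets of $F$, where even-indexed sets are moves of the Proponent (Pro) and odd-indexed sets are moves of the Opponent (Opp), such that (1) each $X_i$ is conflict-free; (2) $X_i\subseteq X_{i+2}$ whenever both are defined; (3) $X_1$ and each $X_{i+2}\setminus X_i$ are finite; (4) every Pro move $X_{2k}$ with $k\ge 1$ satisfies $X_{2k}\succeq X_{2k-1}$; (5) every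 Opp move $X_{2k+1}$ satisfies $X_{2k}\not\succeq X_{2k+1}$ (some element of $X_{2k+1}$ attacks $X_{2k}$ and is not in $X_{2k}^+$). Tenability game: a tenability dispute is defined identically except that (4) and (5) are replaced by (4') $X_{i+1}\succeq X_i$ for every $i$, and (5') every Opp move satisfies $X_{2k+1}\succ X_{2k}$. In either game, play starts with $X_0=A$ and players alternately extend the sequence so that it remains a dispute of the relevant kind. A dispute is concluded if it has no legal extension; a concluded dispute is won by the player who made its last move. A strategy for Pro assigns to each dispute ending with an Opp move a legal Pro reply; it is winning if every concluded dispute starting with $X_0=A$ in which Pro follows it is won by Pro (infinite plays count as wins for Pro). $A$ is strongly tenable (resp. tenable) if Pro has a winning strategy starting with $X_0=A$ in the strong tenability game (resp. tenability game). *)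

theory Defs
  imports Main
begin

text \<open>An argumentation framework is given by a carrier set F and an attack
relation att, a set of pairs (a,b) meaning a attacks b, with att a subset of F \<times> F.\<close>

definition conflict_free :: "('a \<times> 'a) set \<Rightarrow> 'a set \<Rightarrow> bool" where
  "conflict_free att X \<longleftrightarrow> (\<forall>a\<in>X. \<forall>b\<in>X. (a, b) \<notin> att)"

definition attacked_by :: "('a \<times> 'a) set \<Rightarrow> 'a set \<Rightarrow> 'a set" where
  "attacked_by att X = {x. \<exists>a\<in>X. (a, x) \<in> att}"

definition cogent :: "('a \<times> 'a) set \<Rightarrow> 'a set \<Rightarrow> 'a set \<Rightarrow> bool" where
  "cogent att A B \<longleftrightarrow> conflict_free att A \<and>
     (\<forall>b\<in>B. (\<exists>a\<in>A. (b, a) \<in> att) \<longrightarrow> b \<in> attacked_by att A)"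

definition strictly_cogent :: "('a \<times> 'a) set \<Rightarrow> 'a set \<Rightarrow> 'a set \<Rightarrow> bool" where
  "strictly_cogent att B A \<longleftrightarrow> cogent att B A \<and> \<not> cogent att A B"

definition statically_tenable :: "'a set \<Rightarrow> ('a \<times> 'a) set \<Rightarrow> 'a set \<Rightarrow> bool" where
  "statically_tenable F att A \<longleftrightarrow>
     (\<forall>B. B \<subseteq> F \<and> finite B \<and> conflict_free att B \<longrightarrow>
        (\<exists>C. A \<subseteq> C \<and> C \<subseteq> F \<and> conflict_free att C \<and> cogent att C B))"

text \<open>Conditions (1)-(3), common to both kinds of disputes. A dispute
(X_0,...,X_n) is the list [X_0,...,X_n]; even indices are Pro moves.\<close>
definition basic_dispute :: "'a set \<Rightarrow> ('a \<times> 'a) set \<Rightarrow> 'a set list \<Rightarrow> bool" where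
  "basic_dispute F att D \<longleftrightarrow> D \<noteq> [] \<and>
     (\<forall>i < length D. D ! i \<subseteq> F \<and> conflict_free att (D ! i)) \<and>
     (\<forall>i. i + 2 < length D \<longrightarrow> D ! i \<subseteq> D ! (i + 2) \<and> finite (D ! (i + 2) - D ! i)) \<and>
     (1 < length D \<longrightarrow> finite (D ! 1))"

definition strong_dispute :: "'a set \<Rightarrow> ('a \<times> 'a) set \<Rightarrow> 'a set list \<Rightarrow> bool" where
  "strong_dispute F att D \<longleftrightarrow> basic_dispute F att D \<and>
     (\<forall>k. 1 \<le> k \<and> 2 * k < length D \<longrightarrow> cogent att (D ! (2 * k)) (D ! (2 * k - 1))) \<and>
     (\<forall>k. 2 * k + 1 < length D \<longrightarrow> \<not> cogent att (D ! (2 * k)) (D ! (2 * k + 1)))"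

definition tenability_dispute :: "'a set \<Rightarrow> ('a \<times> 'a) set \<Rightarrow> 'a set list \<Rightarrow> bool" where
  "tenability_dispute F att D \<longleftrightarrow> basic_dispute F att D \<and>
     (\<forall>i. i + 1 < length D \<longrightarrow> cogent att (D ! (i + 1)) (D ! i)) \<and>
     (\<forall>k. 2 * k + 1 < length D \<longrightarrow> strictly_cogent att (D ! (2 * k + 1)) (D ! (2 * k)))"

definition follows :: "('a set list \<Rightarrow> 'a set) \<Rightarrow> 'a set list \<Rightarrow> bool" where
  "follows \<sigma> D \<longleftrightarrow> (\<forall>k. 1 \<le> k \<and> 2 * k < length D \<longrightarrow> D ! (2 * k) = \<sigma> (take (2 * k) D))"

text \<open>Pro has a winning strategy from A in the game whose disputes are given by
the predicate dispute: the play can start with X_0 = A, and at every dispute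
starting with A, consistent with sigma and ending with an Opp move (even length),
sigma yields a legal reply. Hence no concluded sigma-consistent play is won by Opp.\<close>
definition pro_wins :: "('a set list \<Rightarrow> bool) \<Rightarrow> 'a set \<Rightarrow> bool" where
  "pro_wins dispute A \<longleftrightarrow> dispute [A] \<and>
     (\<exists>\<sigma>. \<forall>D. dispute D \<and> hd D = A \<and> even (length D) \<and> follows \<sigma> D
              \<longrightarrow> dispute (D @ [\<sigma> D]))"

definition strongly_tenable :: "'a set \<Rightarrow> ('a \<times> 'a) set \<Rightarrow> 'a set \<Rightarrow> bool" where
  "strongly_tenable F att A \<longleftrightarrow> pro_wins (strong_dispute F att) A"

definition tenable :: "'a set \<Rightarrow> ('a \<times> 'a) set \<Rightarrow> 'a set \<Rightarrow> bool" where
  "tenable F att A \<longleftrightarrow> pro_wins (tenability_dispute F att) A"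

end

theory Submission
  imports Defs
begin

(* A tenability dispute is a strong dispute: an Opponent set strictly more cogent than the
   Proponent's is in particular not answered by it, and Proponent moves are constrained alike
   in both games. Conversely, a Proponent reply that is legal in the strong game is legal in the
   tenability game, so a winning strategy for the strong game also wins the tenability game.
   For static tenability, given a finite conflict-free B, let the Opponent open with the part X
   of B that A does not attack: either A is already as cogent as X, or X is a legal opening,
   and the Proponent's reply C \<supseteq> A answers X while inheriting A's attacks on the rest of B.

   Both separating examples take A = {0} in a framework on six arguments. In the first, the
   Proponent answers the opening with a set whose attacks the Opponent could only counter at
   the price of a conflict, which ends the tenability game after one round; the strong game
   lets the Opponent ignore these attacks, and it wins within two rounds. In the second, the
   Opponent wins the tenability game by attacking, in its second move, the counterattacker the
   Proponent has committed to, whereas in the static setting the Proponent chooses the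
   counterattacker knowing B. *)

lemma conflict_freeD: "conflict_free att X \<Longrightarrow> a \<in> X \<Longrightarrow> b \<in> X \<Longrightarrow> (a, b) \<notin> att"
  unfolding conflict_free_def by blast

lemma cogent_counterattack:
  "cogent att X Y \<Longrightarrow> b \<in> Y \<Longrightarrow> (b, a) \<in> att \<Longrightarrow> a \<in> X \<Longrightarrow> \<exists>c\<in>X. (c, b) \<in> att"
  unfolding cogent_def attacked_by_def by blast

lemma attacked_by_mono: "A \<subseteq> C \<Longrightarrow> attacked_by att A \<subseteq> attacked_by att C"
  unfolding attacked_by_def by blast

lemma all_even_less_iff:
  "(\<forall>k. 2 * k + 1 < n \<longrightarrow> P (2 * k)) \<longleftrightarrow> (\<forall>i. Suc i < n \<longrightarrow> even i \<longrightarrow> P i)"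
  by (auto elim!: evenE)

lemma all_odd_less_iff:
  "(\<forall>k. 1 \<le> k \<and> 2 * k < n \<longrightarrow> P (2 * k - 1)) \<longleftrightarrow> (\<forall>i. Suc i < n \<longrightarrow> odd i \<longrightarrow> P i)"
proof safe
  fix i assume "\<forall>k. 1 \<le> k \<and> 2 * k < n \<longrightarrow> P (2 * k - 1)" "Suc i < n" "odd i"
  then show "P i" by (auto elim!: oddE)
next
  fix k :: nat assume "\<forall>i. Suc i < n \<longrightarrow> odd i \<longrightarrow> P i" "1 \<le> k" "2 * k < n"
  then show "P (2 * k - 1)" by (auto elim!: allE[of _ "2 * k - 1"])
qed

(* The move Y answers the move X at (0-based) position i of a dispute; for even i
   the Opponent answers the Proponent. *)
definition tenability_move :: "('a \<times> 'a) set \<Rightarrow> nat \<Rightarrow> 'a set \<Rightarrow> 'a set \<Rightarrow> bool" where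
  "tenability_move att i X Y \<longleftrightarrow> (if even i then strictly_cogent att Y X else cogent att Y X)"

definition strong_move :: "('a \<times> 'a) set \<Rightarrow> nat \<Rightarrow> 'a set \<Rightarrow> 'a set \<Rightarrow> bool" where
  "strong_move att i X Y \<longleftrightarrow> (if even i then \<not> cogent att X Y else cogent att Y X)"

lemma tenability_dispute_iff_moves:
  "tenability_dispute F att D \<longleftrightarrow>
     basic_dispute F att D \<and> (\<forall>i. Suc i < length D \<longrightarrow> tenability_move att i (D ! i) (D ! Suc i))"
  using all_even_less_iff[of "length D" "\<lambda>i. strictly_cogent att (D ! Suc i) (D ! i)"]
  unfolding tenability_dispute_def tenability_move_def strictly_cogent_def by auto

lemma strong_dispute_iff_moves:
  "strong_dispute F att D \<longleftrightarrow>
     basic_dispute F att D \<and> (\<forall>i. Suc i < length D \<longrightarrow> strong_move att i (D ! i) (D ! Suc i))"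
  using all_even_less_iff[of "length D" "\<lambda>i. \<not> cogent att (D ! i) (D ! Suc i)"]
    all_odd_less_iff[of "length D" "\<lambda>i. cogent att (D ! Suc i) (D ! i)"]
  unfolding strong_dispute_def strong_move_def by auto

lemma basic_dispute_iff:
  "basic_dispute F att D \<longleftrightarrow> D \<noteq> [] \<and>
     (\<forall>i < length D. D ! i \<subseteq> F \<and> conflict_free att (D ! i)) \<and>
     (\<forall>i. Suc (Suc i) < length D \<longrightarrow>
        D ! i \<subseteq> D ! Suc (Suc i) \<and> finite (D ! Suc (Suc i) - D ! i)) \<and>
     (Suc 0 < length D \<longrightarrow> finite (D ! Suc 0))"
  by (simp add: basic_dispute_def numeral_2_eq_2)

(* With these rewrites simp decides the dispute conditions on an explicit list of moves. *)
lemmas explicit_dispute_iff =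
  basic_dispute_iff tenability_dispute_iff_moves strong_dispute_iff_moves
  tenability_move_def strong_move_def All_less_Suc2

lemma tenability_dispute_prefix:
  assumes "tenability_dispute F att (D @ E)" and "D \<noteq> []"
  shows "tenability_dispute F att D"
proof -
  let ?DE = "D @ E"
  have dispute: "\<And>i. i < length ?DE \<Longrightarrow> ?DE ! i \<subseteq> F \<and> conflict_free att (?DE ! i)"
    "\<And>i. Suc (Suc i) < length ?DE \<Longrightarrow>
        ?DE ! i \<subseteq> ?DE ! Suc (Suc i) \<and> finite (?DE ! Suc (Suc i) - ?DE ! i)"
    "Suc 0 < length ?DE \<Longrightarrow> finite (?DE ! Suc 0)"
    "\<And>i. Suc i < length ?DE \<Longrightarrow> tenability_move att i (?DE ! i) (?DE ! Suc i)"
    using assms(1) unfolding tenability_dispute_iff_moves basic_dispute_iff by blast+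
  show ?thesis
    unfolding tenability_dispute_iff_moves basic_dispute_iff
  proof (intro conjI allI impI)
    fix i
    assume "i < length D"
    then show "D ! i \<subseteq> F" "conflict_free att (D ! i)"
      using dispute(1)[of i] by (simp_all add: nth_append)
  next
    fix i
    assume "Suc (Suc i) < length D"
    then show "D ! i \<subseteq> D ! Suc (Suc i)" "finite (D ! Suc (Suc i) - D ! i)"
      using dispute(2)[of i] by (simp_all add: nth_append)
  next
    fix i
    assume "Suc i < length D"
    then show "tenability_move att i (D ! i) (D ! Suc i)"
      using dispute(4)[of i] by (simp add: nth_append)
  next
    assume "Suc 0 < length D"
    then show "finite (D ! Suc 0)"
      using dispute(3) by (simp add: nth_append)
  qed (rule assms(2))
qed

lemma tenability_move_imp_strong_move: "tenability_move att i X Y \<Longrightarrow> strong_move att i X Y"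
  unfolding tenability_move_def strong_move_def strictly_cogent_def by auto

lemma odd_strong_move_iff_tenability_move:
  "odd i \<Longrightarrow> strong_move att i X Y \<longleftrightarrow> tenability_move att i X Y"
  unfolding tenability_move_def strong_move_def by simp

lemma tenability_dispute_imp_strong_dispute:
  "tenability_dispute F att D \<Longrightarrow> strong_dispute F att D"
  unfolding tenability_dispute_iff_moves strong_dispute_iff_moves
  using tenability_move_imp_strong_move by blast

lemma tenability_dispute_append_strong_reply:
  assumes "tenability_dispute F att D" and "even (length D)" and "strong_dispute F att (D @ [X])"
  shows "tenability_dispute F att (D @ [X])"
  unfolding tenability_dispute_iff_moves
proof (intro conjI allI impI)
  show "basic_dispute F att (D @ [X])"
    using assms(3) unfolding strong_dispute_iff_moves by blast
  fix i assume i: "Suc i < length (D @ [X])"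
  show "tenability_move att i ((D @ [X]) ! i) ((D @ [X]) ! Suc i)"
  proof (cases "Suc i < length D")
    case True
    then show ?thesis using assms(1) by (simp add: tenability_dispute_iff_moves nth_append)
  next
    case False
    with i have "Suc i = length D" by simp
    with assms(2) have "odd i" by (metis even_Suc)
    then show ?thesis
      using assms(3) i odd_strong_move_iff_tenability_move
      unfolding strong_dispute_iff_moves by blast
  qed
qed

lemma strongly_tenable_imp_tenable:
  assumes "strongly_tenable F att A"
  shows "tenable F att A"
proof -
  obtain \<sigma> where start: "strong_dispute F att [A]"
    and \<sigma>: "\<And>D. strong_dispute F att D \<Longrightarrow> hd D = A \<Longrightarrow> even (length D) \<Longrightarrow> follows \<sigma> D
              \<Longrightarrow> strong_dispute F att (D @ [\<sigma> D])"
    using assms unfolding strongly_tenable_def pro_wins_def by blast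
  have "tenability_dispute F att [A]"
    using start by (simp add: explicit_dispute_iff)
  moreover have "tenability_dispute F att (D @ [\<sigma> D])"
    if "tenability_dispute F att D" "hd D = A" "even (length D)" "follows \<sigma> D" for D
    using that \<sigma> tenability_dispute_imp_strong_dispute tenability_dispute_append_strong_reply
    by blast
  ultimately show ?thesis unfolding tenable_def pro_wins_def by blast
qed

lemma pro_wins_first_reply:
  assumes "pro_wins dispute A" and "dispute [A, X]"
  obtains Y where "dispute [A, X, Y]"
proof -
  obtain \<sigma> where "\<forall>D. dispute D \<and> hd D = A \<and> even (length D) \<and> follows \<sigma> D
                      \<longrightarrow> dispute (D @ [\<sigma> D])"
    using assms(1) unfolding pro_wins_def by blast
  then have "dispute [A, X, \<sigma> [A, X]]"
    using assms(2) by (auto simp: follows_def)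
  then show ?thesis by (rule that)
qed

lemma tenable_imp_statically_tenable:
  assumes "tenable F att A" and "A \<subseteq> F"
  shows "statically_tenable F att A"
  unfolding statically_tenable_def
proof (intro allI impI)
  fix B assume B: "B \<subseteq> F \<and> finite B \<and> conflict_free att B"
  have "conflict_free att A"
    using assms(1) by (simp add: tenable_def pro_wins_def explicit_dispute_iff)
  define X where "X = B - attacked_by att A"
  show "\<exists>C. A \<subseteq> C \<and> C \<subseteq> F \<and> conflict_free att C \<and> cogent att C B"
  proof (cases "cogent att A X")
    case True
    then have "cogent att A B" unfolding cogent_def X_def by blast
    with assms(2) \<open>conflict_free att A\<close> show ?thesis by blast
  next
    case False
    have "cogent att X A"
      using B unfolding cogent_def X_def conflict_free_def attacked_by_def by blast
    with False B assms(2) \<open>conflict_free att A\<close> have "tenability_dispute F att [A, X]"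
      by (auto simp: explicit_dispute_iff strictly_cogent_def X_def conflict_free_def)
    then obtain Y where "tenability_dispute F att [A, X, Y]"
      using assms(1) pro_wins_first_reply unfolding tenable_def by metis
    then have "A \<subseteq> Y" "Y \<subseteq> F" "conflict_free att Y" "cogent att Y X"
      by (simp_all add: explicit_dispute_iff)
    moreover have "cogent att Y B"
      using \<open>cogent att Y X\<close> attacked_by_mono[OF \<open>A \<subseteq> Y\<close>] unfolding cogent_def X_def by blast
    ultimately show ?thesis by blast
  qed
qed

lemma not_pro_wins_if_opp_wins_in_two_rounds:
  assumes "dispute [A, X\<^sub>1]"
    and "\<And>X\<^sub>2. dispute [A, X\<^sub>1, X\<^sub>2] \<Longrightarrow>
           \<exists>X\<^sub>3. dispute [A, X\<^sub>1, X\<^sub>2, X\<^sub>3] \<and> (\<forall>X\<^sub>4. \<not> dispute [A, X\<^sub>1, X\<^sub>2, X\<^sub>3, X\<^sub>4])"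
  shows "\<not> pro_wins dispute A"
proof
  assume "pro_wins dispute A"
  then obtain \<sigma> where \<sigma>: "\<forall>D. dispute D \<and> hd D = A \<and> even (length D) \<and> follows \<sigma> D
                             \<longrightarrow> dispute (D @ [\<sigma> D])"
    unfolding pro_wins_def by blast
  let ?X\<^sub>2 = "\<sigma> [A, X\<^sub>1]"
  have "dispute [A, X\<^sub>1, ?X\<^sub>2]"
    using \<sigma> assms(1) by (auto simp: follows_def)
  then obtain X\<^sub>3 where X\<^sub>3: "dispute [A, X\<^sub>1, ?X\<^sub>2, X\<^sub>3]"
    and stuck: "\<forall>X\<^sub>4. \<not> dispute [A, X\<^sub>1, ?X\<^sub>2, X\<^sub>3, X\<^sub>4]"
    using assms(2) by blast
  have "follows \<sigma> [A, X\<^sub>1, ?X\<^sub>2, X\<^sub>3]"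
    unfolding follows_def
  proof (intro allI impI)
    fix k :: nat assume "1 \<le> k \<and> 2 * k < length [A, X\<^sub>1, ?X\<^sub>2, X\<^sub>3]"
    then have "k = 1" by auto
    then show "[A, X\<^sub>1, ?X\<^sub>2, X\<^sub>3] ! (2 * k) = \<sigma> (take (2 * k) [A, X\<^sub>1, ?X\<^sub>2, X\<^sub>3])"
      by simp
  qed
  with \<sigma> X\<^sub>3 have "dispute [A, X\<^sub>1, ?X\<^sub>2, X\<^sub>3, \<sigma> [A, X\<^sub>1, ?X\<^sub>2, X\<^sub>3]]"
    by auto
  with stuck show False by blast
qed

lemma pro_wins_if_opp_stuck_after_one_round:
  assumes nonempty: "\<not> dispute []"
    and prefix_closed: "\<And>D E. dispute (D @ E) \<Longrightarrow> D \<noteq> [] \<Longrightarrow> dispute D"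
    and start: "dispute [A]"
    and reply: "\<And>X\<^sub>1. dispute [A, X\<^sub>1] \<Longrightarrow> dispute [A, X\<^sub>1, \<rho> X\<^sub>1]"
    and stuck: "\<And>X\<^sub>1 X\<^sub>3. \<not> dispute [A, X\<^sub>1, \<rho> X\<^sub>1, X\<^sub>3]"
  shows "pro_wins dispute A"
  unfolding pro_wins_def
proof (intro conjI start exI allI impI)
  fix D assume D: "dispute D \<and> hd D = A \<and> even (length D) \<and> follows (\<lambda>D. \<rho> (D ! 1)) D"
  with nonempty obtain X\<^sub>1 rest where D_eq: "D = A # X\<^sub>1 # rest"
    by (cases D; cases "tl D") auto
  show "dispute (D @ [\<rho> (D ! 1)])"
  proof (cases rest)
    case Nil
    with D D_eq reply show ?thesis by simp
  next
    case (Cons X\<^sub>2 rest')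
    with D D_eq obtain X\<^sub>3 rest'' where "rest' = X\<^sub>3 # rest''"
      by (cases rest') auto
    moreover have "X\<^sub>2 = \<rho> X\<^sub>1"
      using D unfolding D_eq Cons follows_def by (auto dest: spec[of _ 1])
    ultimately have "dispute ([A, X\<^sub>1, \<rho> X\<^sub>1, X\<^sub>3] @ rest'')"
      using D D_eq Cons by simp
    with prefix_closed stuck show ?thesis by blast
  qed
qed

definition att_strong_sep :: "(nat \<times> nat) set" where
  "att_strong_sep = {(1,2), (1,3), (1,4), (2,4), (2,5), (3,0), (3,5), (4,0), (5,1)}"

definition att_strong_sep_opp_move :: "nat set \<Rightarrow> nat set" where
  "att_strong_sep_opp_move X = (if 1 \<in> X then {4, 5} else {3, 4})"

lemma att_strong_sep_opp_move_unanswerable: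
  assumes "0 \<in> X" and "1 \<in> X \<or> 2 \<in> X" and "X \<subseteq> Z" and cf: "conflict_free att_strong_sep Z"
  shows "\<not> cogent att_strong_sep Z (att_strong_sep_opp_move X)"
proof
  assume cogent: "cogent att_strong_sep Z (att_strong_sep_opp_move X)"
  show False
  proof (cases "1 \<in> X")
    case True
    with assms(3) obtain d where "d \<in> Z" "(d, 5) \<in> att_strong_sep"
      using cogent_counterattack[OF cogent, of 5 1]
      by (auto simp: att_strong_sep_opp_move_def att_strong_sep_def)
    with True assms(1,3) show False
      using conflict_freeD[OF cf, of 1 2] conflict_freeD[OF cf, of 3 0]
      by (auto simp: att_strong_sep_def)
  next
    case False
    with assms(2,3) have "2 \<in> Z" by auto
    from False assms(1,3) obtain d where "d \<in> Z" "(d, 3) \<in> att_strong_sep"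
      using cogent_counterattack[OF cogent, of 3 0]
      by (auto simp: att_strong_sep_opp_move_def att_strong_sep_def)
    with \<open>2 \<in> Z\<close> show False
      using conflict_freeD[OF cf, of 1 2] by (auto simp: att_strong_sep_def)
  qed
qed

lemma att_strong_sep_not_strongly_tenable: "\<not> strongly_tenable {0..5} att_strong_sep {0}"
  unfolding strongly_tenable_def
proof (rule not_pro_wins_if_opp_wins_in_two_rounds)
  let ?att = att_strong_sep
  show "strong_dispute {0..5} ?att [{0}, {4}]"
    by (simp add: explicit_dispute_iff cogent_def conflict_free_def attacked_by_def
        att_strong_sep_def)
  fix X\<^sub>2
  assume X\<^sub>2: "strong_dispute {0..5} ?att [{0}, {4}, X\<^sub>2]"
  then have "0 \<in> X\<^sub>2" and "cogent ?att X\<^sub>2 {4}"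
    by (simp_all add: explicit_dispute_iff)
  then obtain c where "c \<in> X\<^sub>2" "(c, 4) \<in> ?att"
    using cogent_counterattack[of ?att X\<^sub>2 "{4}" 4 0] by (auto simp: att_strong_sep_def)
  then have "1 \<in> X\<^sub>2 \<or> 2 \<in> X\<^sub>2"
    by (auto simp: att_strong_sep_def)
  note unanswerable = att_strong_sep_opp_move_unanswerable[OF \<open>0 \<in> X\<^sub>2\<close> this]
  let ?X\<^sub>3 = "att_strong_sep_opp_move X\<^sub>2"
  have "conflict_free ?att ?X\<^sub>3"
    by (auto simp: att_strong_sep_opp_move_def conflict_free_def att_strong_sep_def)
  with X\<^sub>2 unanswerable[of X\<^sub>2] have "strong_dispute {0..5} ?att [{0}, {4}, X\<^sub>2, ?X\<^sub>3]"
    by (auto simp: explicit_dispute_iff att_strong_sep_opp_move_def)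
  moreover have "\<not> strong_dispute {0..5} ?att [{0}, {4}, X\<^sub>2, ?X\<^sub>3, X\<^sub>4]" for X\<^sub>4
    using unanswerable[of X\<^sub>4] by (auto simp: explicit_dispute_iff)
  ultimately show "\<exists>X\<^sub>3. strong_dispute {0..5} ?att [{0}, {4}, X\<^sub>2, X\<^sub>3] \<and>
      (\<forall>X\<^sub>4. \<not> strong_dispute {0..5} ?att [{0}, {4}, X\<^sub>2, X\<^sub>3, X\<^sub>4])"
    by blast
qed

definition att_strong_sep_pro_reply :: "nat set \<Rightarrow> nat set" where
  "att_strong_sep_pro_reply X = (if 3 \<in> X then {0, 1} else {0, 2})"

lemma att_strong_sep_opening:
  assumes "tenability_dispute {0..5} att_strong_sep [{0}, X]"
  shows "3 \<in> X \<or> 4 \<in> X"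
proof -
  from assms have "\<not> cogent att_strong_sep {0} X"
    by (simp add: explicit_dispute_iff strictly_cogent_def)
  then obtain x where "x \<in> X" "(x, 0) \<in> att_strong_sep"
    by (auto simp: cogent_def conflict_free_def attacked_by_def att_strong_sep_def)
  then show ?thesis by (auto simp: att_strong_sep_def)
qed

lemma att_strong_sep_pro_reply_legal:
  assumes X: "tenability_dispute {0..5} att_strong_sep [{0}, X]"
  shows "tenability_dispute {0..5} att_strong_sep [{0}, X, att_strong_sep_pro_reply X]"
proof -
  from X have cf: "conflict_free att_strong_sep X"
    by (simp add: explicit_dispute_iff)
  have "cogent att_strong_sep (att_strong_sep_pro_reply X) X"
  proof (cases "3 \<in> X")
    case True
    then have "5 \<notin> X"
      using conflict_freeD[OF cf, of 3 5] by (auto simp: att_strong_sep_def)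
    with True show ?thesis
      by (auto simp: att_strong_sep_pro_reply_def cogent_def conflict_free_def attacked_by_def
          att_strong_sep_def)
  next
    case False
    with att_strong_sep_opening[OF X] have "4 \<in> X" by simp
    then have "1 \<notin> X"
      using conflict_freeD[OF cf, of 1 4] by (auto simp: att_strong_sep_def)
    with False show ?thesis
      by (auto simp: att_strong_sep_pro_reply_def cogent_def conflict_free_def attacked_by_def
          att_strong_sep_def)
  qed
  with X show ?thesis
    by (auto simp: explicit_dispute_iff cogent_def att_strong_sep_pro_reply_def)
qed

lemma att_strong_sep_no_second_opp_move:
  "\<not> tenability_dispute {0..5} att_strong_sep [{0}, X\<^sub>1, att_strong_sep_pro_reply X\<^sub>1, X\<^sub>3]"
proof
  let ?att = att_strong_sep
  assume dispute: "tenability_dispute {0..5} ?att [{0}, X\<^sub>1, att_strong_sep_pro_reply X\<^sub>1, X\<^sub>3]"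
  then have "X\<^sub>1 \<subseteq> X\<^sub>3" and cf: "conflict_free ?att X\<^sub>3"
    and cogent: "cogent ?att X\<^sub>3 (att_strong_sep_pro_reply X\<^sub>1)"
    by (simp_all add: explicit_dispute_iff strictly_cogent_def)
  from dispute have "tenability_dispute {0..5} ?att [{0}, X\<^sub>1]"
    using tenability_dispute_prefix[of _ _ "[{0}, X\<^sub>1]"] by simp
  show False
  proof (cases "3 \<in> X\<^sub>1")
    case True
    with \<open>X\<^sub>1 \<subseteq> X\<^sub>3\<close> obtain d where "3 \<in> X\<^sub>3" "d \<in> X\<^sub>3" "(d, 1) \<in> ?att"
      using cogent_counterattack[OF cogent, of 1 3]
      by (auto simp: att_strong_sep_pro_reply_def att_strong_sep_def)
    then show False
      using conflict_freeD[OF cf, of 3 5] by (auto simp: att_strong_sep_def)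
  next
    case False
    with att_strong_sep_opening \<open>tenability_dispute {0..5} ?att [{0}, X\<^sub>1]\<close> \<open>X\<^sub>1 \<subseteq> X\<^sub>3\<close>
    obtain d where "4 \<in> X\<^sub>3" "d \<in> X\<^sub>3" "(d, 2) \<in> ?att"
      using cogent_counterattack[OF cogent, of 2 4]
      by (auto simp: att_strong_sep_pro_reply_def att_strong_sep_def)
    then show False
      using conflict_freeD[OF cf, of 1 4] by (auto simp: att_strong_sep_def)
  qed
qed

lemma att_strong_sep_tenable: "tenable {0..5} att_strong_sep {0}"
  unfolding tenable_def
proof (rule pro_wins_if_opp_stuck_after_one_round[where \<rho> = att_strong_sep_pro_reply])
  show "\<not> tenability_dispute {0..5} att_strong_sep []"
    by (simp add: explicit_dispute_iff)
  show "tenability_dispute {0..5} att_strong_sep [{0}]"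
    by (simp add: explicit_dispute_iff conflict_free_def att_strong_sep_def)
qed (fact tenability_dispute_prefix att_strong_sep_pro_reply_legal
    att_strong_sep_no_second_opp_move)+

definition att_static_sep :: "(nat \<times> nat) set" where
  "att_static_sep = {(1,2), (1,3), (1,5), (2,0), (3,2), (3,4), (4,1), (4,5), (5,3)}"

lemma att_static_sep_statically_tenable: "statically_tenable {0..5} att_static_sep {0}"
  unfolding statically_tenable_def
proof (intro allI impI)
  let ?att = att_static_sep
  fix B :: "nat set"
  assume "B \<subseteq> {0..5} \<and> finite B \<and> conflict_free ?att B"
  then have cf: "conflict_free ?att B" by blast
  define C :: "nat set" where "C = (if 2 \<notin> B then {0} else if 4 \<notin> B then {0, 1} else {0, 3})"
  have "cogent ?att C B"
  proof (cases "2 \<in> B")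
    case False
    then show ?thesis
      by (auto simp: C_def cogent_def conflict_free_def att_static_sep_def)
  next
    case True
    then have "1 \<notin> B"
      using conflict_freeD[OF cf, of 1 2] by (auto simp: att_static_sep_def)
    show ?thesis
    proof (cases "4 \<in> B")
      case False
      with True \<open>1 \<notin> B\<close> show ?thesis
        by (auto simp: C_def cogent_def conflict_free_def attacked_by_def att_static_sep_def)
    next
      case True
      then have "5 \<notin> B"
        using conflict_freeD[OF cf, of 4 5] by (auto simp: att_static_sep_def)
      with True \<open>2 \<in> B\<close> \<open>1 \<notin> B\<close> show ?thesis
        by (auto simp: C_def cogent_def conflict_free_def attacked_by_def att_static_sep_def)
    qed
  qed
  moreover have "{0} \<subseteq> C" "C \<subseteq> {0..5}"
    by (auto simp: C_def)
  ultimately show "\<exists>C. {0} \<subseteq> C \<and> C \<subseteq> {0..5} \<and> conflict_free ?att C \<and> cogent ?att C B"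
    unfolding cogent_def by blast
qed

definition att_static_sep_opp_move :: "nat set \<Rightarrow> nat set" where
  "att_static_sep_opp_move X = (if 1 \<in> X then {2, 4} else {2, 5})"

lemma att_static_sep_opp_move_unanswerable:
  assumes "1 \<in> X \<or> 3 \<in> X" and "X \<subseteq> Z" and cf: "conflict_free att_static_sep Z"
  shows "\<not> cogent att_static_sep Z (att_static_sep_opp_move X)"
proof
  assume cogent: "cogent att_static_sep Z (att_static_sep_opp_move X)"
  show False
  proof (cases "1 \<in> X")
    case True
    with assms(2) obtain d where "d \<in> Z" "(d, 4) \<in> att_static_sep"
      using cogent_counterattack[OF cogent, of 4 1]
      by (auto simp: att_static_sep_opp_move_def att_static_sep_def)
    with True assms(2) show False
      using conflict_freeD[OF cf, of 1 3] by (auto simp: att_static_sep_def)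
  next
    case False
    with assms(1,2) have "3 \<in> Z" by auto
    with False obtain d where "d \<in> Z" "(d, 5) \<in> att_static_sep"
      using cogent_counterattack[OF cogent, of 5 3]
      by (auto simp: att_static_sep_opp_move_def att_static_sep_def)
    with \<open>3 \<in> Z\<close> show False
      using conflict_freeD[OF cf, of 1 3] conflict_freeD[OF cf, of 3 4]
      by (auto simp: att_static_sep_def)
  qed
qed

lemma att_static_sep_not_tenable: "\<not> tenable {0..5} att_static_sep {0}"
  unfolding tenable_def
proof (rule not_pro_wins_if_opp_wins_in_two_rounds)
  let ?att = att_static_sep
  show "tenability_dispute {0..5} ?att [{0}, {2}]"
    by (simp add: explicit_dispute_iff strictly_cogent_def cogent_def conflict_free_def
        attacked_by_def att_static_sep_def)
  fix X\<^sub>2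
  assume X\<^sub>2: "tenability_dispute {0..5} ?att [{0}, {2}, X\<^sub>2]"
  then have "0 \<in> X\<^sub>2" and cf: "conflict_free ?att X\<^sub>2" and "cogent ?att X\<^sub>2 {2}"
    by (simp_all add: explicit_dispute_iff)
  then obtain c where "c \<in> X\<^sub>2" "(c, 2) \<in> ?att"
    using cogent_counterattack[of ?att X\<^sub>2 "{2}" 2 0] by (auto simp: att_static_sep_def)
  then have counterattacker: "1 \<in> X\<^sub>2 \<or> 3 \<in> X\<^sub>2"
    by (auto simp: att_static_sep_def)
  note unanswerable = att_static_sep_opp_move_unanswerable[OF this]
  let ?X\<^sub>3 = "att_static_sep_opp_move X\<^sub>2"
  have "2 \<notin> X\<^sub>2" "1 \<in> X\<^sub>2 \<Longrightarrow> 3 \<notin> X\<^sub>2" "3 \<in> X\<^sub>2 \<Longrightarrow> 4 \<notin> X\<^sub>2"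
    using \<open>0 \<in> X\<^sub>2\<close> conflict_freeD[OF cf, of 2 0] conflict_freeD[OF cf, of 1 3]
      conflict_freeD[OF cf, of 3 4]
    by (auto simp: att_static_sep_def)
  with counterattacker have "cogent ?att ?X\<^sub>3 X\<^sub>2"
    by (auto simp: att_static_sep_opp_move_def cogent_def conflict_free_def attacked_by_def
        att_static_sep_def)
  with X\<^sub>2 unanswerable[of X\<^sub>2] cf have "tenability_dispute {0..5} ?att [{0}, {2}, X\<^sub>2, ?X\<^sub>3]"
    by (auto simp: explicit_dispute_iff strictly_cogent_def cogent_def att_static_sep_opp_move_def)
  moreover have "\<not> tenability_dispute {0..5} ?att [{0}, {2}, X\<^sub>2, ?X\<^sub>3, X\<^sub>4]" for X\<^sub>4
    using unanswerable[of X\<^sub>4] by (auto simp: explicit_dispute_iff)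
  ultimately show "\<exists>X\<^sub>3. tenability_dispute {0..5} ?att [{0}, {2}, X\<^sub>2, X\<^sub>3] \<and>
      (\<forall>X\<^sub>4. \<not> tenability_dispute {0..5} ?att [{0}, {2}, X\<^sub>2, X\<^sub>3, X\<^sub>4])"
    by blast
qed

theorem proposition1:
  fixes F :: "'a set" and att :: "('a \<times> 'a) set" and A :: "'a set"
  assumes "att \<subseteq> F \<times> F" and "A \<subseteq> F"
  shows "(strongly_tenable F att A \<longrightarrow> tenable F att A)
       \<and> (tenable F att A \<longrightarrow> statically_tenable F att A)
       \<and> (\<exists>(F' :: nat set) att' A'. finite F' \<and> att' \<subseteq> F' \<times> F' \<and> A' \<subseteq> F' \<and>
             tenable F' att' A' \<and> \<not> strongly_tenable F' att' A')
       \<and> (\<exists>(F' :: nat set) att' A'. finite F' \<and> att' \<subseteq> F' \<times> F' \<and> A' \<subseteq> F' \<and>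
             statically_tenable F' att' A' \<and> \<not> tenable F' att' A')"
proof (intro conjI impI)
  show "tenable F att A" if "strongly_tenable F att A"
    using that by (rule strongly_tenable_imp_tenable)
  show "statically_tenable F att A" if "tenable F att A"
    using that assms(2) by (rule tenable_imp_statically_tenable)
  have frameworks: "finite {0..5 :: nat}" "{0} \<subseteq> {0..5 :: nat}"
    "att_strong_sep \<subseteq> {0..5} \<times> {0..5}" "att_static_sep \<subseteq> {0..5} \<times> {0..5}"
    by (auto simp: att_strong_sep_def att_static_sep_def)
  show "\<exists>(F' :: nat set) att' A'. finite F' \<and> att' \<subseteq> F' \<times> F' \<and> A' \<subseteq> F' \<and>
          tenable F' att' A' \<and> \<not> strongly_tenable F' att' A'"
    using frameworks att_strong_sep_tenable att_strong_sep_not_strongly_tenable by blast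
  show "\<exists>(F' :: nat set) att' A'. finite F' \<and> att' \<subseteq> F' \<times> F' \<and> A' \<subseteq> F' \<and>
          statically_tenable F' att' A' \<and> \<not> tenable F' att' A'"
    using frameworks att_static_sep_statically_tenable att_static_sep_not_tenable by blast
qed

end
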